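(* Let $l\in\{1,2,3\}$ and $\lambda_0>0$. Let the base stations be the points of a homogeneous Poisson point process in $\mathbb R^l$ with intensity $\lambda_0$, with a mobile station at the origin, all transmission powers and shadow fading factors equal to $1$. For an increasing path-loss function $h$, let $\left(\frac CI\right)_h=\frac{1/h(R_1)}{\sum_{i\ge2}1/h(R_i)}$, where $R_1\le R_2\le\cdots$ are the ordered distances of the base stations from the origin. Let $h_1(r)=r^{\varepsilon_1}$ for $r\ge0$ and $h_2(r)=r^{\varepsilon_1}$ for $r\le1$, $h_2(r)=r^{\varepsilon_2}$ for $r>1$, and write $\left(\frac CI\right)_i=\left(\frac CI\right)_{h_i}$. If $\varepsilon_2>\varepsilon_1>l$, then $\left(\frac CI\right)_1\le_{\mathrm{st}}\left(\frac CI\right)_2$. If $\varepsilon_1>\varepsilon_2>l$, then $\left(\frac CI\right)_1\ge_{\mathrm{st}}\left(\frac CI\right)_2$.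
   Context: The mobile is served by the BS with strongest received power (the nearest one) and all other BSs interfere; received power at distance $R$ is $1/h(R)$. For random variables $X,Y$, $X\le_{\mathrm{st}}Y$ means $\mathbb P(X>x)\le\mathbb P(Y>x)$ for all real $x$, and $X\ge_{\mathrm{st}}Y$ means $Y\le_{\mathrm{st}}X$. *)

theory Defs
  imports "HOL-Probability.Probability"
begin

definition pcount :: "'a set \<Rightarrow> 'a set \<Rightarrow> nat" where
  "pcount P B = card (P \<inter> B)"

definition hppp :: "'b measure \<Rightarrow> real \<Rightarrow> ('b \<Rightarrow> 'a::euclidean_space set) \<Rightarrow> bool" where
  "hppp M lam Phi \<longleftrightarrow>
     (\<forall>\<omega>\<in>space M. \<forall>B. bounded B \<longrightarrow> finite (Phi \<omega> \<inter> B)) \<and>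
     (\<forall>B\<in>sets (borel :: 'a measure). bounded B \<longrightarrow>
        (\<lambda>\<omega>. pcount (Phi \<omega>) B) \<in> measurable M (count_space UNIV) \<and>
        (\<forall>k::nat. measure M {\<omega>\<in>space M. pcount (Phi \<omega>) B = k}
            = exp (- (lam * measure lborel B)) * (lam * measure lborel B) ^ k / fact k)) \<and>
     (\<forall>(I::nat set) (Bs::nat \<Rightarrow> 'a set).
        finite I \<and> (\<forall>i\<in>I. Bs i \<in> sets borel \<and> bounded (Bs i)) \<and> disjoint_family_on Bs I \<longrightarrow>
        prob_space.indep_vars M (\<lambda>_. count_space UNIV) (\<lambda>i \<omega>. pcount (Phi \<omega>) (Bs i)) I)"

text \<open>k-th smallest distance (k \<ge> 1, counted with multiplicity) of the points of P
  from the origin.\<close>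
definition ord_dist :: "'a::real_normed_vector set \<Rightarrow> nat \<Rightarrow> real" where
  "ord_dist P k = Inf {r. 0 \<le> r \<and> k \<le> card {x\<in>P. norm x \<le> r}}"

definition CI :: "(real \<Rightarrow> real) \<Rightarrow> 'a::real_normed_vector set \<Rightarrow> real" where
  "CI h P = (1 / h (ord_dist P 1)) / (\<Sum>i. 1 / h (ord_dist P (i + 2)))"

definition st_le :: "'b measure \<Rightarrow> ('b \<Rightarrow> real) \<Rightarrow> ('b \<Rightarrow> real) \<Rightarrow> bool" where
  "st_le M X Y \<longleftrightarrow> (\<forall>x::real. measure M {\<omega>\<in>space M. X \<omega> > x} \<le> measure M {\<omega>\<in>space M. Y \<omega> > x})"

definition h_one :: "real \<Rightarrow> real \<Rightarrow> real" where
  "h_one e1 r = r powr e1"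

definition h_two :: "real \<Rightarrow> real \<Rightarrow> real \<Rightarrow> real" where
  "h_two e1 e2 r = (if r \<le> 1 then r powr e1 else r powr e2)"

end

theory Submission
  imports Defs "HOL-Real_Asymp.Real_Asymp"
begin

text \<open>
  Since \<open>CI h = 1 / (\<Sum>i\<ge>2. h R\<^sub>1 / h R\<^sub>i)\<close>, the comparison holds pathwise: if \<open>G / g\<close> is
  nondecreasing then \<open>G R\<^sub>1 / G R\<^sub>i \<le> g R\<^sub>1 / g R\<^sub>i\<close> because \<open>R\<^sub>1 \<le> R\<^sub>i\<close>, hence
  \<open>CI g \<le> CI G\<close> for every configuration. For the two path-loss models the ratio is
  \<open>h_two e1 e2 r / h_one e1 r = (max 1 r) powr (e2 - e1)\<close>, so the direction of the order is the
  sign of \<open>e2 - e1\<close>.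

  The probabilistic content is that the interference series converge almost surely. The Poisson
  tail bound \<open>P(N \<ge> t) \<le> E N / t\<close> and Borel--Cantelli show that almost surely the ball of
  radius \<open>2 ^ n\<close> eventually holds at most \<open>2 powr (n * l)\<close> points, for any \<open>l\<close> above the
  dimension; then \<open>R\<^sub>k\<close> grows at least like \<open>k powr (1 / l)\<close>, and \<open>\<Sum>k. R\<^sub>k powr -e\<close>
  converges for \<open>e > l\<close>.
\<close>

section \<open>Order statistics of a locally finite configuration\<close>

definition ball_count :: "'a::real_normed_vector set \<Rightarrow> real \<Rightarrow> nat" where
  "ball_count P r = card {x\<in>P. norm x \<le> r}"

definition finite_in_balls :: "'a::real_normed_vector set \<Rightarrow> bool" where
  "finite_in_balls P \<longleftrightarrow> (\<forall>r. finite {x\<in>P. norm x \<le> r})"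

definition covering_radii :: "'a::real_normed_vector set \<Rightarrow> nat \<Rightarrow> real set" where
  "covering_radii P k = {r. 0 \<le> r \<and> k \<le> ball_count P r}"

lemma ord_dist_eq_Inf_covering_radii: "ord_dist P k = Inf (covering_radii P k)"
  by (simp add: ord_dist_def covering_radii_def ball_count_def)

lemma ball_count_mono: "finite_in_balls P \<Longrightarrow> r \<le> s \<Longrightarrow> ball_count P r \<le> ball_count P s"
  unfolding ball_count_def finite_in_balls_def by (intro card_mono) auto

lemma bdd_below_covering_radii: "bdd_below (covering_radii P k)"
  unfolding covering_radii_def bdd_below_def by auto

lemma covering_radii_upward_closed:
  "finite_in_balls P \<Longrightarrow> r \<in> covering_radii P k \<Longrightarrow> r \<le> s \<Longrightarrow> s \<in> covering_radii P k"
  unfolding covering_radii_def using ball_count_mono[of P r s] by auto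

lemma covering_radii_nonempty:
  assumes "finite_in_balls P" "infinite P"
  shows "covering_radii P k \<noteq> {}"
proof -
  obtain A where A: "finite A" "card A = k" "A \<subseteq> P"
    using infinite_arbitrarily_large[OF assms(2)] by blast
  obtain r where r: "0 < r" "\<And>x. x \<in> A \<Longrightarrow> norm x \<le> r"
    using bounded_pos finite_imp_bounded[OF A(1)] by blast
  have "k \<le> ball_count P r"
    unfolding ball_count_def A(2)[symmetric]
    using assms(1) A(3) r(2) by (intro card_mono) (auto simp: finite_in_balls_def)
  then have "r \<in> covering_radii P k" using r(1) unfolding covering_radii_def by simp
  then show ?thesis by blast
qed

lemma ord_dist_nonneg: "finite_in_balls P \<Longrightarrow> infinite P \<Longrightarrow> 0 \<le> ord_dist P k"
  unfolding ord_dist_eq_Inf_covering_radii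
  by (rule cInf_greatest[OF covering_radii_nonempty]) (auto simp: covering_radii_def)

lemma ord_dist_mono:
  assumes "finite_in_balls P" "infinite P" "k \<le> k'"
  shows "ord_dist P k \<le> ord_dist P k'"
  unfolding ord_dist_eq_Inf_covering_radii using assms
  by (intro cInf_superset_mono covering_radii_nonempty bdd_below_covering_radii)
     (auto simp: covering_radii_def)

lemma ord_dist_less_iff:
  assumes "finite_in_balls P" "covering_radii P k \<noteq> {}"
  shows "ord_dist P k < t \<longleftrightarrow>
    (\<exists>q::rat. 0 \<le> real_of_rat q \<and> real_of_rat q < t \<and> k \<le> ball_count P (real_of_rat q))"
proof
  assume "ord_dist P k < t"
  then obtain s where s: "s \<in> covering_radii P k" "s < t"
    using cInf_lessD[OF assms(2)] by (auto simp: ord_dist_eq_Inf_covering_radii)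
  obtain q where q: "s < real_of_rat q" "real_of_rat q < t"
    using of_rat_dense[OF s(2)] by blast
  then have "real_of_rat q \<in> covering_radii P k"
    using covering_radii_upward_closed[OF assms(1) s(1)] by simp
  with q(2) show "\<exists>q. 0 \<le> real_of_rat q \<and> real_of_rat q < t \<and> k \<le> ball_count P (real_of_rat q)"
    by (auto simp: covering_radii_def)
next
  assume "\<exists>q. 0 \<le> real_of_rat q \<and> real_of_rat q < t \<and> k \<le> ball_count P (real_of_rat q)"
  then obtain q where "real_of_rat q \<in> covering_radii P k" "real_of_rat q < t"
    by (auto simp: covering_radii_def)
  then show "ord_dist P k < t"
    unfolding ord_dist_eq_Inf_covering_radii
    using cInf_lower[OF _ bdd_below_covering_radii] by fastforce
qed

lemma ord_dist_ge:
  assumes "finite_in_balls P" "infinite P" "ball_count P t < k"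
  shows "t \<le> ord_dist P k"
proof (rule ccontr)
  assume "\<not> t \<le> ord_dist P k"
  then have "ord_dist P k < t" by simp
  then obtain q where "real_of_rat q < t" "k \<le> ball_count P (real_of_rat q)"
    using ord_dist_less_iff[OF assms(1) covering_radii_nonempty[OF assms(1,2)]] by blast
  then show False using ball_count_mono[OF assms(1), of "real_of_rat q" t] assms(3) by simp
qed

lemma covering_radii_eq_empty_iff:
  assumes "finite_in_balls P"
  shows "covering_radii P k = {} \<longleftrightarrow> (\<forall>n::nat. ball_count P (real n) < k)"
proof
  assume "covering_radii P k = {}"
  then show "\<forall>n::nat. ball_count P (real n) < k"
    unfolding covering_radii_def by (auto simp: not_le[symmetric])
next
  assume small: "\<forall>n::nat. ball_count P (real n) < k"
  show "covering_radii P k = {}"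
  proof (rule ccontr)
    assume "covering_radii P k \<noteq> {}"
    then obtain r where r: "r \<in> covering_radii P k" by blast
    obtain n :: nat where "r \<le> real n" using real_arch_simple by blast
    with covering_radii_upward_closed[OF assms r] small show False
      by (auto simp: covering_radii_def not_le[symmetric])
  qed
qed

section \<open>Pathwise comparison of carrier-to-interference ratios\<close>

lemma divide_le_divide_cross:
  fixes a b c d :: real
  assumes "0 \<le> a" "0 \<le> b" "0 \<le> c" "0 \<le> d" "a * d \<le> c * b" "d = 0 \<Longrightarrow> b = 0"
  shows "a / b \<le> c / d"
  using assms by (cases "b = 0"; cases "d = 0") (auto simp: divide_simps mult.commute)

lemma CI_le_CI_if_ratio_mono:
  fixes P :: "'a::real_normed_vector set" and g G :: "real \<Rightarrow> real"
  assumes P: "finite_in_balls P" "infinite P"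
    and summable: "summable (\<lambda>i. 1 / g (ord_dist P (i + 2)))"
      "summable (\<lambda>i. 1 / G (ord_dist P (i + 2)))"
    and nonneg: "\<And>r. 0 \<le> r \<Longrightarrow> 0 \<le> g r" "\<And>r. 0 \<le> r \<Longrightarrow> 0 \<le> G r"
    and zero: "\<And>r. 0 \<le> r \<Longrightarrow> G r = 0 \<longleftrightarrow> g r = 0"
    and ratio_mono: "\<And>r s. 0 \<le> r \<Longrightarrow> r \<le> s \<Longrightarrow> G r * g s \<le> g r * G s"
  shows "CI g P \<le> CI G P"
proof -
  define R where "R i = ord_dist P i" for i
  have R_nonneg: "0 \<le> R i" for i
    unfolding R_def using ord_dist_nonneg[OF P] .
  have cross: "1 / g (R 1) * (1 / G (R (i + 2))) \<le> 1 / G (R 1) * (1 / g (R (i + 2)))" for i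
  proof -
    have R_le: "R 1 \<le> R (i + 2)" unfolding R_def by (rule ord_dist_mono[OF P]) simp
    show ?thesis
    proof (cases "g (R 1) = 0 \<or> g (R (i + 2)) = 0")
      case True
      then consider "g (R 1) = 0" "G (R 1) = 0" | "g (R (i + 2)) = 0" "G (R (i + 2)) = 0"
        using zero[OF R_nonneg] by blast
      then show ?thesis by cases simp_all
    next
      case False
      then have "0 < g (R 1)" "0 < g (R (i + 2))" "0 < G (R 1)" "0 < G (R (i + 2))"
        using nonneg zero R_nonneg by (auto simp: less_le)
      with ratio_mono[OF R_nonneg R_le] show ?thesis by (simp add: divide_simps)
    qed
  qed
  have series_g_vanishes: "(\<Sum>i. 1 / g (R (i + 2))) = 0" if "(\<Sum>i. 1 / G (R (i + 2))) = 0"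
  proof -
    have "1 / G (R (i + 2)) = 0" for i
      using that summable(2) nonneg(2)[OF R_nonneg] unfolding R_def
      by (subst (asm) suminf_eq_zero_iff) auto
    then show ?thesis using zero[OF R_nonneg] by simp
  qed
  show ?thesis
    unfolding CI_def R_def[symmetric]
  proof (rule divide_le_divide_cross)
    have "1 / g (R 1) * (\<Sum>i. 1 / G (R (i + 2))) = (\<Sum>i. 1 / g (R 1) * (1 / G (R (i + 2))))"
      using summable(2) unfolding R_def by (rule suminf_mult[symmetric])
    also have "\<dots> \<le> (\<Sum>i. 1 / G (R 1) * (1 / g (R (i + 2))))"
      using cross summable unfolding R_def by (intro suminf_le summable_mult) auto
    also have "\<dots> = 1 / G (R 1) * (\<Sum>i. 1 / g (R (i + 2)))"
      using summable(1) unfolding R_def by (rule suminf_mult)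
    finally show "1 / g (R 1) * (\<Sum>i. 1 / G (R (i + 2))) \<le> 1 / G (R 1) * (\<Sum>i. 1 / g (R (i + 2)))" .
  qed (use series_g_vanishes nonneg R_nonneg summable in \<open>auto simp: R_def intro!: suminf_nonneg\<close>)
qed

lemma h_one_eq_h_two: "h_one e = h_two e e"
  by (simp add: fun_eq_iff h_one_def h_two_def)

lemma h_two_eq_mult_max_powr:
  assumes "0 \<le> r"
  shows "h_two e1 e3 r = h_two e1 e2 r * max 1 r powr (e3 - e2)"
  using assms by (auto simp: h_two_def max_def powr_add[symmetric])

lemma h_two_ratio_mono:
  assumes "e2 \<le> e3" "0 \<le> r" "r \<le> s"
  shows "h_two e1 e3 r * h_two e1 e2 s \<le> h_two e1 e2 r * h_two e1 e3 s"
proof -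
  have "h_two e1 e3 r * h_two e1 e2 s
      = h_two e1 e2 r * h_two e1 e2 s * max 1 r powr (e3 - e2)"
    using h_two_eq_mult_max_powr[OF assms(2), of e1 e3 e2] by simp
  also have "\<dots> \<le> h_two e1 e2 r * h_two e1 e2 s * max 1 s powr (e3 - e2)"
    using assms by (intro mult_left_mono powr_mono2) (auto simp: h_two_def)
  also have "\<dots> = h_two e1 e2 r * h_two e1 e3 s"
    using h_two_eq_mult_max_powr[of s e1 e3 e2] assms by simp
  finally show ?thesis .
qed

section \<open>Convergence of the interference series\<close>

lemma ord_dist_ge_root:
  assumes P: "finite_in_balls P" "infinite P" and l: "0 < l"
    and growth: "\<And>n. n0 \<le> n \<Longrightarrow> real (ball_count P (2 ^ n)) \<le> 2 powr (real n * l)"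
    and j: "2 * 2 powr (real n0 * l) \<le> real j"
  shows "(real j / 2) powr (1 / l) / 2 \<le> ord_dist P j"
proof -
  have "(0::real) < 2 powr (real n0 * l)" by simp
  define x where "x = (real j / 2) powr (1 / l)"
  have x_powr_l: "x powr l = real j / 2"
    unfolding x_def using l by (simp add: powr_powr)
  have "(2::real) ^ n0 = (2 powr (real n0 * l)) powr (1 / l)"
    using l by (simp add: powr_powr powr_realpow)
  also have "\<dots> \<le> x"
    unfolding x_def using j l by (intro powr_mono2) auto
  finally have x_ge: "2 ^ n0 \<le> x" .
  then have "1 \<le> x" by (meson order.trans one_le_power one_le_numeral)
  define n where "n = nat \<lfloor>log 2 x\<rfloor>"
  have "\<lfloor>log 2 x\<rfloor> = int n"
    unfolding n_def using \<open>1 \<le> x\<close> by simp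
  then have n: "2 ^ n \<le> x" "x < 2 ^ Suc n"
    using \<open>1 \<le> x\<close> by (simp_all add: floor_log_eq_powr_iff powr_add powr_realpow)
  have "n0 \<le> n"
  proof (rule ccontr)
    assume "\<not> n0 \<le> n"
    then have "(2::real) ^ Suc n \<le> 2 ^ n0" by (intro power_increasing) auto
    with n(2) x_ge show False by simp
  qed
  then have "real (ball_count P (2 ^ n)) \<le> (2 ^ n) powr l"
    using growth by (simp add: powr_powr powr_realpow[symmetric] mult.commute)
  also have "\<dots> \<le> x powr l"
    using n(1) l by (intro powr_mono2) auto
  also have "\<dots> < real j"
    using x_powr_l j \<open>(0::real) < 2 powr (real n0 * l)\<close> by linarith
  finally have "ball_count P (2 ^ n) < j"
    by simp
  then have "2 ^ n \<le> ord_dist P j"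
    by (rule ord_dist_ge[OF P])
  with n(2) show ?thesis unfolding x_def by simp
qed

lemma summable_inverse_path_loss_ord_dist:
  assumes P: "finite_in_balls P" "infinite P" and l: "0 < l" "l < e"
    and growth: "\<And>n. n0 \<le> n \<Longrightarrow> real (ball_count P (2 ^ n)) \<le> 2 powr (real n * l)"
    and h: "\<And>r. \<rho> \<le> r \<Longrightarrow> r powr e \<le> h r" and \<rho>: "0 < \<rho>"
  shows "summable (\<lambda>i. 1 / h (ord_dist P (i + 2)))"
proof (rule summable_comparison_test_ev)
  define c where "c = 2 powr e * 2 powr (e / l)"
  show "summable (\<lambda>i. c * real (i + 2) powr - (e / l))"
    using l summable_ignore_initial_segment[of "\<lambda>i. real i powr - (e / l)" 2]
    by (intro summable_mult) (simp add: summable_real_powr_iff)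
  have "eventually (\<lambda>i. 2 * 2 powr (real n0 * l) \<le> real (i + 2) \<and>
      \<rho> \<le> (real (i + 2) / 2) powr (1 / l) / 2) at_top"
    using l by (intro eventually_conj; real_asymp)
  then show "eventually (\<lambda>i. norm (1 / h (ord_dist P (i + 2))) \<le> c * real (i + 2) powr - (e / l)) at_top"
  proof eventually_elim
    case (elim i)
    define y where "y = (real (i + 2) / 2) powr (1 / l) / 2"
    have y: "y \<le> ord_dist P (i + 2)" "\<rho> \<le> y"
      using ord_dist_ge_root[OF P l(1) growth elim[THEN conjunct1]] elim unfolding y_def by auto
    have "y powr e \<le> ord_dist P (i + 2) powr e"
      using y \<rho> l by (intro powr_mono2) auto
    also have "\<dots> \<le> h (ord_dist P (i + 2))"
      using h y by simp
    finally have "norm (1 / h (ord_dist P (i + 2))) \<le> 1 / y powr e"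
      using y \<rho> by (simp add: frac_le)
    moreover have "y powr e = real (i + 2) powr (e / l) / (2 powr (e / l) * 2 powr e)"
      using l unfolding y_def by (simp add: powr_divide powr_powr powr_mult)
    then have "1 / y powr e = c * real (i + 2) powr - (e / l)"
      unfolding c_def by (simp add: powr_minus divide_inverse mult_ac)
    ultimately show ?case by simp
  qed
qed

section \<open>Measurability and the stochastic order\<close>

lemma measurable_ord_dist:
  assumes finite: "\<And>\<omega>. \<omega> \<in> space M \<Longrightarrow> finite_in_balls (Phi \<omega>)"
    and [measurable]: "\<And>r. (\<lambda>\<omega>. ball_count (Phi \<omega>) r) \<in> measurable M (count_space UNIV)"
  shows "(\<lambda>\<omega>. ord_dist (Phi \<omega>) k) \<in> borel_measurable M"
proof (subst borel_measurable_iff_less, intro allI)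
  fix t :: real
  have less_iff: "ord_dist (Phi \<omega>) k < t \<longleftrightarrow>
      (if \<forall>n::nat. ball_count (Phi \<omega>) (real n) < k then Inf {} < t
       else \<exists>q::rat. 0 \<le> real_of_rat q \<and> real_of_rat q < t \<and> k \<le> ball_count (Phi \<omega>) (real_of_rat q))"
    if "\<omega> \<in> space M" for \<omega>
  proof (cases "covering_radii (Phi \<omega>) k = {}")
    case True
    with covering_radii_eq_empty_iff[OF finite[OF that], of k]
    have "\<forall>n::nat. ball_count (Phi \<omega>) (real n) < k" by simp
    then show ?thesis unfolding ord_dist_eq_Inf_covering_radii True by simp
  next
    case False
    with covering_radii_eq_empty_iff[OF finite[OF that], of k]
    have "\<not> (\<forall>n::nat. ball_count (Phi \<omega>) (real n) < k)" by simp
    then show ?thesis using ord_dist_less_iff[OF finite[OF that] False] by auto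
  qed
  have "{\<omega>\<in>space M. ord_dist (Phi \<omega>) k < t} = {\<omega>\<in>space M.
      if \<forall>n::nat. ball_count (Phi \<omega>) (real n) < k then Inf {} < t
      else \<exists>q::rat. 0 \<le> real_of_rat q \<and> real_of_rat q < t \<and> k \<le> ball_count (Phi \<omega>) (real_of_rat q)}"
    using less_iff by (intro Collect_cong conj_cong refl) (simp only:)
  also have "\<dots> \<in> sets M" by measurable
  finally show "{\<omega>\<in>space M. ord_dist (Phi \<omega>) k < t} \<in> sets M" .
qed

lemma measurable_CI:
  assumes "\<And>\<omega>. \<omega> \<in> space M \<Longrightarrow> finite_in_balls (Phi \<omega>)"
    and "\<And>r. (\<lambda>\<omega>. ball_count (Phi \<omega>) r) \<in> measurable M (count_space UNIV)"
    and [measurable]: "h \<in> borel_measurable borel"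
  shows "(\<lambda>\<omega>. CI h (Phi \<omega>)) \<in> borel_measurable M"
proof -
  have [measurable]: "(\<lambda>\<omega>. ord_dist (Phi \<omega>) k) \<in> borel_measurable M" for k
    using assms(1,2) by (rule measurable_ord_dist)
  show ?thesis unfolding CI_def by measurable
qed

lemma (in prob_space) st_le_if_AE_le:
  assumes [measurable]: "Y \<in> borel_measurable M" and "AE \<omega> in M. X \<omega> \<le> Y \<omega>"
  shows "st_le M X Y"
  unfolding st_le_def
  using assms(2) by (auto intro!: finite_measure_mono_AE elim: eventually_mono)

lemma h_two_measurable [measurable]: "h_two e1 e2 \<in> borel_measurable borel"
  unfolding h_two_def[abs_def] by measurable

section \<open>Poisson point processes\<close>

lemma (in prob_space) poisson_tail_le:
  assumes [measurable]: "X \<in> measurable M (count_space UNIV)"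
    and law: "\<And>k. prob {\<omega>\<in>space M. X \<omega> = k} = exp (- \<mu>) * \<mu> ^ k / fact k"
    and \<mu>: "0 \<le> \<mu>" and t: "0 < t"
  shows "prob {\<omega>\<in>space M. t \<le> real (X \<omega>)} \<le> \<mu> / t"
proof -
  define m where "m = nat \<lceil>t\<rceil>"
  have m: "0 < m" "t \<le> real m"
    unfolding m_def using t by linarith+
  have t_le_iff: "t \<le> real n \<longleftrightarrow> m \<le> n" for n
    unfolding m_def by linarith
  define p where "p k = prob {\<omega>\<in>space M. X \<omega> = k}" for k
  have p_sums: "(\<lambda>j. p (n + j)) sums prob {\<omega>\<in>space M. n \<le> X \<omega>}" for n
  proof -
    have "(\<lambda>j. prob {\<omega>\<in>space M. X \<omega> = n + j}) sums prob (\<Union>j. {\<omega>\<in>space M. X \<omega> = n + j})"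
      by (rule finite_measure_UNION) (auto simp: disjoint_family_on_def)
    also have "(\<Union>j. {\<omega>\<in>space M. X \<omega> = n + j}) = {\<omega>\<in>space M. n \<le> X \<omega>}"
      by (auto simp: le_iff_add)
    finally show ?thesis unfolding p_def .
  qed
  have "p (m + j) \<le> \<mu> / real m * p (m - 1 + j)" for j
  proof -
    have "p (m + j) = \<mu> / real (m + j) * p (m - 1 + j)"
      using m(1) unfolding p_def law by (cases m) (auto simp: field_simps)
    also have "\<dots> \<le> \<mu> / real m * p (m - 1 + j)"
      using m(1) \<mu> unfolding p_def by (intro mult_right_mono divide_left_mono) auto
    finally show ?thesis .
  qed
  then have "prob {\<omega>\<in>space M. m \<le> X \<omega>} \<le> \<mu> / real m * prob {\<omega>\<in>space M. m - 1 \<le> X \<omega>}"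
    by (intro sums_le[OF _ p_sums sums_mult[OF p_sums]])
  also have "\<dots> \<le> \<mu> / real m"
    using \<mu> by (intro mult_left_le) auto
  also have "\<dots> \<le> \<mu> / t"
    using m \<mu> t by (intro divide_left_mono) auto
  finally show ?thesis by (simp add: t_le_iff)
qed

lemma (in prob_space) poisson_lower_tail_le:
  assumes [measurable]: "X \<in> measurable M (count_space UNIV)"
    and law: "\<And>k. prob {\<omega>\<in>space M. X \<omega> = k} = exp (- \<mu>) * \<mu> ^ k / fact k"
  shows "prob {\<omega>\<in>space M. X \<omega> < k} \<le> (\<Sum>j<k. exp (- \<mu>) * \<mu> ^ j / fact j)"
proof -
  have "{\<omega>\<in>space M. X \<omega> < k} = (\<Union>j<k. {\<omega>\<in>space M. X \<omega> = j})" by auto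
  then have "prob {\<omega>\<in>space M. X \<omega> < k} \<le> (\<Sum>j<k. prob {\<omega>\<in>space M. X \<omega> = j})"
    by (simp only:) (rule finite_measure_subadditive_finite, auto)
  then show ?thesis using law by simp
qed

lemma poisson_lower_tail_tendsto_0:
  fixes \<mu> :: "'a \<Rightarrow> real"
  assumes "filterlim \<mu> at_top F"
  shows "((\<lambda>x. \<Sum>j<k. exp (- \<mu> x) * \<mu> x ^ j / fact j) \<longlongrightarrow> 0) F"
proof (rule tendsto_null_sum)
  fix j
  have "((\<lambda>x. \<mu> x ^ j / exp (\<mu> x)) \<longlongrightarrow> 0) F"
    by (rule filterlim_compose[OF tendsto_power_div_exp_0 assms])
  then have "((\<lambda>x. \<mu> x ^ j / exp (\<mu> x) / fact j) \<longlongrightarrow> 0) F"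
    by (rule tendsto_divide_zero)
  then show "((\<lambda>x. exp (- \<mu> x) * \<mu> x ^ j / fact j) \<longlongrightarrow> 0) F"
    by (simp add: exp_minus field_simps)
qed

lemma ball_count_eq_pcount: "ball_count P r = pcount P (cball 0 r)"
  unfolding ball_count_def pcount_def by (rule arg_cong[where f = card]) (auto simp: mem_cball_0)

lemma hppp_finite_in_balls:
  assumes "hppp M lam Phi" "\<omega> \<in> space M"
  shows "finite_in_balls (Phi \<omega>)"
proof -
  have "finite (Phi \<omega> \<inter> cball 0 r)" for r
    using assms unfolding hppp_def by auto
  moreover have "{x\<in>Phi \<omega>. norm x \<le> r} = Phi \<omega> \<inter> cball 0 r" for r
    by (auto simp: mem_cball_0)
  ultimately show ?thesis unfolding finite_in_balls_def by simp
qed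

lemma hppp_measurable_ball_count:
  "hppp M lam Phi \<Longrightarrow> (\<lambda>\<omega>. ball_count (Phi \<omega>) r) \<in> measurable M (count_space UNIV)"
  unfolding hppp_def ball_count_eq_pcount by auto

lemma hppp_ball_count_poisson:
  fixes Phi :: "'b \<Rightarrow> 'a::euclidean_space set"
  assumes "hppp M lam Phi" "0 \<le> r"
  shows "measure M {\<omega>\<in>space M. ball_count (Phi \<omega>) r = k}
    = exp (- (lam * unit_ball_vol DIM('a) * r ^ DIM('a)))
      * (lam * unit_ball_vol DIM('a) * r ^ DIM('a)) ^ k / fact k"
  using assms content_cball[of r "0::'a"] unfolding hppp_def ball_count_eq_pcount
  by (auto simp: mult.assoc)

lemma (in prob_space) AE_hppp_infinite:
  fixes Phi :: "'a \<Rightarrow> 'b::euclidean_space set"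
  assumes H: "hppp M lam Phi" and lam: "0 < lam"
  shows "AE \<omega> in M. infinite (Phi \<omega>)"
proof -
  note [measurable] = hppp_measurable_ball_count[OF H]
  define \<mu> where "\<mu> n = lam * unit_ball_vol DIM('b) * real n ^ DIM('b)" for n :: nat
  have "filterlim (\<lambda>n. real n ^ DIM('b)) at_top sequentially"
    by (intro filterlim_pow_at_top filterlim_real_sequentially) simp
  then have \<mu>_at_top: "filterlim \<mu> at_top sequentially"
    unfolding \<mu>_def using lam
    by (intro filterlim_tendsto_pos_mult_at_top[OF tendsto_const]) simp_all
  have "AE \<omega> in M. \<exists>n::nat. k \<le> ball_count (Phi \<omega>) (real n)" for k
  proof -
    define E where "E = {\<omega>\<in>space M. \<forall>n::nat. ball_count (Phi \<omega>) (real n) < k}"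
    have [measurable]: "E \<in> sets M" unfolding E_def by measurable
    have "prob E \<le> (\<Sum>j<k. exp (- \<mu> n) * \<mu> n ^ j / fact j)" for n
    proof -
      have "prob E \<le> prob {\<omega>\<in>space M. ball_count (Phi \<omega>) (real n) < k}"
        by (rule finite_measure_mono) (auto simp: E_def)
      also have "\<dots> \<le> (\<Sum>j<k. exp (- \<mu> n) * \<mu> n ^ j / fact j)"
        by (rule poisson_lower_tail_le[OF hppp_measurable_ball_count[OF H]])
           (simp add: hppp_ball_count_poisson[OF H] \<mu>_def)
      finally show ?thesis .
    qed
    then have "prob E \<le> 0"
      by (intro LIMSEQ_le_const[OF poisson_lower_tail_tendsto_0[OF \<mu>_at_top]]) auto
    then have "E \<in> null_sets M"
      by (simp add: null_sets_def emeasure_eq_measure measure_nonneg order_antisym)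
    then show ?thesis by (rule AE_I') (auto simp: E_def not_le)
  qed
  then have "AE \<omega> in M. \<forall>k. \<exists>n::nat. k \<le> ball_count (Phi \<omega>) (real n)"
    by (simp add: AE_all_countable)
  then show ?thesis
  proof (rule eventually_mono)
    fix \<omega> assume unbounded: "\<forall>k. \<exists>n::nat. k \<le> ball_count (Phi \<omega>) (real n)"
    show "infinite (Phi \<omega>)"
    proof
      assume "finite (Phi \<omega>)"
      then have "ball_count (Phi \<omega>) r \<le> card (Phi \<omega>)" for r
        unfolding ball_count_def by (intro card_mono) auto
      with unbounded show False by (meson not_less_eq_eq)
    qed
  qed
qed

lemma (in prob_space) AE_hppp_dyadic_growth:
  fixes Phi :: "'a \<Rightarrow> 'b::euclidean_space set"
  assumes H: "hppp M lam Phi" and lam: "0 < lam" and l: "real DIM('b) < l"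
  shows "AE \<omega> in M. \<exists>n0. \<forall>n\<ge>n0. real (ball_count (Phi \<omega>) (2 ^ n)) \<le> 2 powr (real n * l)"
proof -
  note [measurable] = hppp_measurable_ball_count[OF H]
  define V where "V = unit_ball_vol DIM('b)"
  define c where "c = (2::real) powr (real DIM('b) - l)"
  have c: "0 \<le> c" "c < 1" unfolding c_def using l by (auto intro: powr_less_one)
  define A where "A n = {\<omega>\<in>space M. 2 powr (real n * l) < real (ball_count (Phi \<omega>) (2 ^ n))}" for n
  have [measurable]: "A n \<in> sets M" for n unfolding A_def by measurable
  have A_le: "prob (A n) \<le> lam * V * c ^ n" for n
  proof -
    define \<mu> where "\<mu> = lam * V * (2 ^ n) ^ DIM('b)"
    have "prob (A n) \<le> prob {\<omega>\<in>space M. 2 powr (real n * l) \<le> real (ball_count (Phi \<omega>) (2 ^ n))}"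
      by (rule finite_measure_mono) (auto simp: A_def)
    also have "\<dots> \<le> \<mu> / 2 powr (real n * l)"
      by (rule poisson_tail_le[OF hppp_measurable_ball_count[OF H]])
         (use lam in \<open>simp_all add: hppp_ball_count_poisson[OF H] \<mu>_def V_def\<close>)
    also have "\<dots> = lam * V * c ^ n"
    proof -
      have "c ^ n = 2 powr ((real DIM('b) - l) * real n)"
        unfolding c_def by (simp add: powr_realpow[symmetric] powr_powr)
      also have "\<dots> = 2 powr (real (n * DIM('b))) / 2 powr (real n * l)"
        by (simp add: powr_diff[symmetric] algebra_simps)
      moreover have "((2::real) ^ n) ^ DIM('b) = 2 powr (real (n * DIM('b)))"
        by (subst powr_realpow) (simp_all add: power_mult)
      ultimately show ?thesis
        unfolding \<mu>_def by simp
    qed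
    finally show ?thesis .
  qed
  have "summable (\<lambda>n. lam * V * c ^ n)"
    using c by (intro summable_mult summable_geometric) auto
  then have "summable (\<lambda>n. prob (A n))"
    by (rule summable_comparison_test'[where N = 0]) (use A_le in auto)
  then have "AE \<omega> in M. eventually (\<lambda>n. \<omega> \<in> space M - A n) sequentially"
    by (intro borel_cantelli_AE1) (auto simp: emeasure_eq_measure)
  then show ?thesis
    by (rule eventually_mono) (auto simp: A_def eventually_sequentially not_less)
qed

lemma (in prob_space) AE_hppp_summable_inverse_path_loss:
  fixes Phi :: "'a \<Rightarrow> 'b::euclidean_space set"
  assumes H: "hppp M lam Phi" and lam: "0 < lam" and e: "real DIM('b) < e"
    and h: "\<And>r. \<rho> \<le> r \<Longrightarrow> r powr e \<le> h r" and \<rho>: "0 < \<rho>"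
  shows "AE \<omega> in M. summable (\<lambda>i. 1 / h (ord_dist (Phi \<omega>) (i + 2)))"
proof -
  define l where "l = (real DIM('b) + e) / 2"
  have l: "real DIM('b) < l" "0 < l" "l < e"
    using e by (auto simp: l_def)
  have "AE \<omega> in M. \<exists>n0. \<forall>n\<ge>n0. real (ball_count (Phi \<omega>) (2 ^ n)) \<le> 2 powr (real n * l)"
    by (rule AE_hppp_dyadic_growth[OF H lam l(1)])
  moreover have "AE \<omega> in M. infinite (Phi \<omega>)"
    by (rule AE_hppp_infinite[OF H lam])
  ultimately show ?thesis
  proof (elim AE_mp, intro AE_I2 impI)
    fix \<omega> assume "\<omega> \<in> space M" "infinite (Phi \<omega>)"
      and "\<exists>n0. \<forall>n\<ge>n0. real (ball_count (Phi \<omega>) (2 ^ n)) \<le> 2 powr (real n * l)"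
    then show "summable (\<lambda>i. 1 / h (ord_dist (Phi \<omega>) (i + 2)))"
      using summable_inverse_path_loss_ord_dist[OF hppp_finite_in_balls[OF H] _ l(2,3) _ h \<rho>]
      by blast
  qed
qed

lemma (in prob_space) st_le_CI_h_two:
  fixes Phi :: "'a \<Rightarrow> 'b::euclidean_space set"
  assumes H: "hppp M lam Phi" and lam: "0 < lam" and e: "real DIM('b) < e2" "e2 \<le> e3"
  shows "st_le M (\<lambda>\<omega>. CI (h_two e1 e2) (Phi \<omega>)) (\<lambda>\<omega>. CI (h_two e1 e3) (Phi \<omega>))"
proof (rule st_le_if_AE_le)
  show "(\<lambda>\<omega>. CI (h_two e1 e3) (Phi \<omega>)) \<in> borel_measurable M"
    using hppp_finite_in_balls[OF H] hppp_measurable_ball_count[OF H] h_two_measurable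
    by (rule measurable_CI)
  have summable: "AE \<omega> in M. summable (\<lambda>i. 1 / h_two e1 e (ord_dist (Phi \<omega>) (i + 2)))"
    if "real DIM('b) < e" for e
    by (rule AE_hppp_summable_inverse_path_loss[where \<rho> = 1, OF H lam that]) (auto simp: h_two_def)
  have "real DIM('b) < e3" using e by linarith
  show "AE \<omega> in M. CI (h_two e1 e2) (Phi \<omega>) \<le> CI (h_two e1 e3) (Phi \<omega>)"
    using AE_hppp_infinite[OF H lam] summable[OF e(1)] summable[OF \<open>real DIM('b) < e3\<close>]
  proof (elim AE_mp, intro AE_I2 impI)
    fix \<omega> assume "\<omega> \<in> space M" "infinite (Phi \<omega>)"
      and "summable (\<lambda>i. 1 / h_two e1 e2 (ord_dist (Phi \<omega>) (i + 2)))"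
      and "summable (\<lambda>i. 1 / h_two e1 e3 (ord_dist (Phi \<omega>) (i + 2)))"
    then show "CI (h_two e1 e2) (Phi \<omega>) \<le> CI (h_two e1 e3) (Phi \<omega>)"
      using hppp_finite_in_balls[OF H] h_two_ratio_mono[OF e(2)]
      by (intro CI_le_CI_if_ratio_mono) (auto simp: h_two_def)
  qed
qed

theorem corollary6:
  fixes M :: "'b measure" and Phi :: "'b \<Rightarrow> 'a::euclidean_space set"
    and lam0 e1 e2 :: real
  assumes "prob_space M"
    and "DIM('a) \<in> {1, 2, 3}"
    and "lam0 > 0"
    and "hppp M lam0 Phi"
  shows "(e2 > e1 \<and> e1 > real DIM('a) \<longrightarrow>
            st_le M (\<lambda>\<omega>. CI (h_one e1) (Phi \<omega>)) (\<lambda>\<omega>. CI (h_two e1 e2) (Phi \<omega>))) \<and>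
         (e1 > e2 \<and> e2 > real DIM('a) \<longrightarrow>
            st_le M (\<lambda>\<omega>. CI (h_two e1 e2) (Phi \<omega>)) (\<lambda>\<omega>. CI (h_one e1) (Phi \<omega>)))"
  using prob_space.st_le_CI_h_two[OF assms(1,4,3)]
  by (simp add: h_one_eq_h_two)

end
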